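(* Let $T$ be a monoid and $(X,\cdot)$ an order-preserving left action of $T$ on a semilattice $X$ with identity. Then the $*$-left Ehresmann monoid $\mathcal{P}_\ell(T,X)$ has proper basis $H^{\mathcal{P}}=\{te:t\in T,e\in X\}$. Moreover, for any $\alpha\in\mathcal{P}_\ell(T,X)$ with $H^{\mathcal{P}}$-canonical form $\alpha=h_1\cdots h_n$, we have $\alpha^+=h_1^+$ and $\alpha^*=h_n^*$.
   Context: A semilattice is a commutative semigroup of idempotents, ordered by $e\le f$ iff $ef=e$. An order-preserving left action satisfies $1_T\cdot x=x$, $s\cdot(t\cdot x)=st\cdot x$, $x\le y\Rightarrow t\cdot x\le t\cdot y$. Construction: let $T*X$ be the semigroup free product; it acts on $X$ with elements of $X$ acting by multiplication; put $\omega^+=\omega\cdot1_X$; let $\sim$ be the semigroup congruence generated by $\{(\alpha^+\alpha,\alpha)\}\cup\{(1_T,1_X)\}$ and $\mathcal{P}_\ell(T,X)=(T*X)/\sim$ with $[\alpha]^+=[\alpha^+]$; identify $X$ and $T$ with their (injective) images $\{[x]\}$, $\{[t]\}$. It is known that $\mathcal{P}_\ell(T,X)$ is left Ehresmann with projections $X$, generated by $X\cup T$, with unique $T$-normal forms ($t_0e_1t_1\cdots e_nt_n$, $n\ge0$, $e_i\in X\setminus\{1\}$, $t_1,\dots,t_{n-1}\in T\setminus\{1\}$, $e_i<(t_ie_{i+1}\cdots e_nt_n)^+$), and each $\sigma$-class contains exactly one element of $T$. It becomes $*$-left Ehresmann via $a^*=e_n$ if $n\ge1$ and $t_n=1$ in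 the $T$-normal form, $a^*=1$ otherwise. A $*$-left Ehresmann monoid is a monoid with unary operations $+,*$ satisfying $x^+x=x$, $(x^+y^+)^+=x^+y^+$, $x^+y^+=y^+x^+$, $(xy)^+=(xy^+)^+$, $xx^*=x$, $(x^* )^*=x^*$, $x^*y^*=y^*x^*$, $(xy^* )^*y^*=(xy^* )^*$, $(x^* )^+=x^*$, $(x^+)^*=x^+$; $E=\{a^+\}=\{a^*\}$; $\sigma$ is the least monoid congruence containing $E\times E$. $H\subseteq M$ is atomic if: (H1) $E\subseteq H$; (H2) $h\in H,e\in E$ imply $he\in H$ and $(he)^*=h^*e$; (H3) if $h\in H$, $k\in H\setminus E$, $h^*\ge k^+$ then $hk\in H$ and $(hk)^*=k^*$; (H4) every $m$ is $\sigma$-related to some $h\in H$; (H5) if $h,k,w\in H$, $hk\,\sigma\,w$, $k^*=w^*$, then some $u\in H$ has $u\,\sigma\,h$, $u^*\ge k^+$. $H$ is proper if ($h^*=k^*$ and $h\,\sigma\,k$) iff $h=k$. $h_1\cdots h_n$ is in $H$-canonical form if $h_i^*<h_{i+1}^+$ ($1\le i<n$) and $h_i\notin E$ ($2\le i\le n$); $M$ has $H$-canonical forms if each element has exactly one such expression. A basis is an atomic generating set $H$ for which $M$ has $H$-canonical forms; a proper basis is a basis which is proper. *)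

theory Defs
  imports Main
begin

text \<open>A monoid M is given by a carrier C, a multiplication mul, an identity one,
and unary operations pl (the +) and st (the *).\<close>

definition projs :: "'m set \<Rightarrow> ('m \<Rightarrow> 'm) \<Rightarrow> 'm set" where
  "projs C pl = pl ` C"

definition ple :: "('m \<Rightarrow> 'm \<Rightarrow> 'm) \<Rightarrow> 'm \<Rightarrow> 'm \<Rightarrow> bool" where
  "ple mul e f \<longleftrightarrow> mul e f = e"

definition plt :: "('m \<Rightarrow> 'm \<Rightarrow> 'm) \<Rightarrow> 'm \<Rightarrow> 'm \<Rightarrow> bool" where
  "plt mul e f \<longleftrightarrow> ple mul e f \<and> e \<noteq> f"

inductive sigma :: "'m set \<Rightarrow> ('m \<Rightarrow> 'm \<Rightarrow> 'm) \<Rightarrow> ('m \<Rightarrow> 'm) \<Rightarrow> 'm \<Rightarrow> 'm \<Rightarrow> bool"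
  for C mul pl where
  sig_base: "e \<in> projs C pl \<Longrightarrow> f \<in> projs C pl \<Longrightarrow> sigma C mul pl e f"
| sig_refl: "a \<in> C \<Longrightarrow> sigma C mul pl a a"
| sig_sym: "sigma C mul pl a b \<Longrightarrow> sigma C mul pl b a"
| sig_trans: "sigma C mul pl a b \<Longrightarrow> sigma C mul pl b c \<Longrightarrow> sigma C mul pl a c"
| sig_left: "sigma C mul pl a b \<Longrightarrow> c \<in> C \<Longrightarrow> sigma C mul pl (mul c a) (mul c b)"
| sig_right: "sigma C mul pl a b \<Longrightarrow> c \<in> C \<Longrightarrow> sigma C mul pl (mul a c) (mul b c)"

definition atomic ::
  "'m set \<Rightarrow> ('m \<Rightarrow> 'm \<Rightarrow> 'm) \<Rightarrow> ('m \<Rightarrow> 'm) \<Rightarrow> ('m \<Rightarrow> 'm) \<Rightarrow> 'm set \<Rightarrow> bool" where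
  "atomic C mul pl st H \<longleftrightarrow>
     H \<subseteq> C \<and>
     \<comment> \<open>(H1)\<close>
     projs C pl \<subseteq> H \<and>
     \<comment> \<open>(H2)\<close>
     (\<forall>h\<in>H. \<forall>e\<in>projs C pl. mul h e \<in> H \<and> st (mul h e) = mul (st h) e) \<and>
     \<comment> \<open>(H3)\<close>
     (\<forall>h\<in>H. \<forall>k\<in>H - projs C pl. ple mul (pl k) (st h) \<longrightarrow>
        mul h k \<in> H \<and> st (mul h k) = st k) \<and>
     \<comment> \<open>(H4)\<close>
     (\<forall>m\<in>C. \<exists>h\<in>H. sigma C mul pl m h) \<and>
     \<comment> \<open>(H5)\<close>
     (\<forall>h\<in>H. \<forall>k\<in>H. \<forall>w\<in>H. sigma C mul pl (mul h k) w \<and> st k = st w \<longrightarrow>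
        (\<exists>u\<in>H. sigma C mul pl u h \<and> ple mul (pl k) (st u)))"

definition proper_set ::
  "'m set \<Rightarrow> ('m \<Rightarrow> 'm \<Rightarrow> 'm) \<Rightarrow> ('m \<Rightarrow> 'm) \<Rightarrow> ('m \<Rightarrow> 'm) \<Rightarrow> 'm set \<Rightarrow> bool" where
  "proper_set C mul pl st H \<longleftrightarrow>
     (\<forall>h\<in>H. \<forall>k\<in>H. (st h = st k \<and> sigma C mul pl h k) \<longleftrightarrow> h = k)"

inductive_set mgen :: "('m \<Rightarrow> 'm \<Rightarrow> 'm) \<Rightarrow> 'm \<Rightarrow> 'm set \<Rightarrow> 'm set"
  for mul one H where
  mgen_one: "one \<in> mgen mul one H"
| mgen_gen: "h \<in> H \<Longrightarrow> h \<in> mgen mul one H"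
| mgen_mul: "a \<in> mgen mul one H \<Longrightarrow> b \<in> mgen mul one H \<Longrightarrow> mul a b \<in> mgen mul one H"

definition generates :: "'m set \<Rightarrow> ('m \<Rightarrow> 'm \<Rightarrow> 'm) \<Rightarrow> 'm \<Rightarrow> 'm set \<Rightarrow> bool" where
  "generates C mul one H \<longleftrightarrow> C \<subseteq> mgen mul one H"

fun lprod :: "('m \<Rightarrow> 'm \<Rightarrow> 'm) \<Rightarrow> 'm list \<Rightarrow> 'm" where
  "lprod mul [h] = h"
| "lprod mul (h # hs) = mul h (lprod mul hs)"
| "lprod mul [] = undefined"

definition canonical ::
  "'m set \<Rightarrow> ('m \<Rightarrow> 'm \<Rightarrow> 'm) \<Rightarrow> ('m \<Rightarrow> 'm) \<Rightarrow> ('m \<Rightarrow> 'm) \<Rightarrow> 'm set \<Rightarrow> 'm list \<Rightarrow> bool" where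
  "canonical C mul pl st H hs \<longleftrightarrow>
     hs \<noteq> [] \<and> set hs \<subseteq> H \<and>
     (\<forall>i. Suc i < length hs \<longrightarrow> plt mul (st (hs ! i)) (pl (hs ! Suc i))) \<and>
     (\<forall>i. 0 < i \<and> i < length hs \<longrightarrow> hs ! i \<notin> projs C pl)"

definition has_canonical_forms ::
  "'m set \<Rightarrow> ('m \<Rightarrow> 'm \<Rightarrow> 'm) \<Rightarrow> ('m \<Rightarrow> 'm) \<Rightarrow> ('m \<Rightarrow> 'm) \<Rightarrow> 'm set \<Rightarrow> bool" where
  "has_canonical_forms C mul pl st H \<longleftrightarrow>
     (\<forall>a\<in>C. \<exists>!hs. canonical C mul pl st H hs \<and> lprod mul hs = a)"

definition basis ::
  "'m set \<Rightarrow> ('m \<Rightarrow> 'm \<Rightarrow> 'm) \<Rightarrow> 'm \<Rightarrow> ('m \<Rightarrow> 'm) \<Rightarrow> ('m \<Rightarrow> 'm) \<Rightarrow> 'm set \<Rightarrow> bool" where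
  "basis C mul one pl st H \<longleftrightarrow>
     atomic C mul pl st H \<and> generates C mul one H \<and> has_canonical_forms C mul pl st H"

definition proper_basis ::
  "'m set \<Rightarrow> ('m \<Rightarrow> 'm \<Rightarrow> 'm) \<Rightarrow> 'm \<Rightarrow> ('m \<Rightarrow> 'm) \<Rightarrow> ('m \<Rightarrow> 'm) \<Rightarrow> 'm set \<Rightarrow> bool" where
  "proper_basis C mul one pl st H \<longleftrightarrow>
     basis C mul one pl st H \<and> proper_set C mul pl st H"

definition order_preserving_action :: "('t::monoid_mult \<Rightarrow> 'x::bounded_semilattice_inf_top \<Rightarrow> 'x) \<Rightarrow> bool" where
  "order_preserving_action act \<longleftrightarrow>
     (\<forall>x. act 1 x = x) \<and>
     (\<forall>s t x. act s (act t x) = act (s * t) x) \<and>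
     (\<forall>t x y. x \<le> y \<longrightarrow> act t x \<le> act t y)"

text \<open>Words over T + X. Nonempty words, modulo merging adjacent letters from the same
factor, form the semigroup free product T*X.\<close>

type_synonym ('t, 'x) word = "('t + 'x) list"

fun wact :: "('t \<Rightarrow> 'x::semilattice_inf \<Rightarrow> 'x) \<Rightarrow> ('t, 'x) word \<Rightarrow> 'x \<Rightarrow> 'x" where
  "wact act [] x = x"
| "wact act (Inl t # w) x = act t (wact act w x)"
| "wact act (Inr e # w) x = inf e (wact act w x)"

definition wplus :: "('t \<Rightarrow> 'x::bounded_semilattice_inf_top \<Rightarrow> 'x) \<Rightarrow> ('t, 'x) word \<Rightarrow> 'x" where
  "wplus act w = wact act w top"

text \<open>The quotient is P_l(T,X) = (T*X)/~.\<close>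
inductive pcong :: "('t::monoid_mult \<Rightarrow> 'x::bounded_semilattice_inf_top \<Rightarrow> 'x)
    \<Rightarrow> ('t, 'x) word \<Rightarrow> ('t, 'x) word \<Rightarrow> bool" for act where
  pc_mergeT: "pcong act [Inl s, Inl t] [Inl (s * t)]"
| pc_mergeX: "pcong act [Inr e, Inr f] [Inr (inf e f)]"
| pc_plus: "w \<noteq> [] \<Longrightarrow> pcong act (Inr (wplus act w) # w) w"
| pc_one: "pcong act [Inl 1] [Inr top]"
| pc_refl: "w \<noteq> [] \<Longrightarrow> pcong act w w"
| pc_sym: "pcong act u v \<Longrightarrow> pcong act v u"
| pc_trans: "pcong act u v \<Longrightarrow> pcong act v w \<Longrightarrow> pcong act u w"
| pc_left: "pcong act u v \<Longrightarrow> w \<noteq> [] \<Longrightarrow> pcong act (w @ u) (w @ v)"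
| pc_right: "pcong act u v \<Longrightarrow> w \<noteq> [] \<Longrightarrow> pcong act (u @ w) (v @ w)"

definition pcls :: "('t::monoid_mult \<Rightarrow> 'x::bounded_semilattice_inf_top \<Rightarrow> 'x)
    \<Rightarrow> ('t, 'x) word \<Rightarrow> ('t, 'x) word set" where
  "pcls act w = {v. pcong act w v}"

definition Pcar :: "('t::monoid_mult \<Rightarrow> 'x::bounded_semilattice_inf_top \<Rightarrow> 'x)
    \<Rightarrow> ('t, 'x) word set set" where
  "Pcar act = {pcls act w | w. w \<noteq> []}"

definition Pmul :: "('t::monoid_mult \<Rightarrow> 'x::bounded_semilattice_inf_top \<Rightarrow> 'x)
    \<Rightarrow> ('t, 'x) word set \<Rightarrow> ('t, 'x) word set \<Rightarrow> ('t, 'x) word set" where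
  "Pmul act A B = (\<Union>a\<in>A. \<Union>b\<in>B. pcls act (a @ b))"

definition Pone :: "('t::monoid_mult \<Rightarrow> 'x::bounded_semilattice_inf_top \<Rightarrow> 'x)
    \<Rightarrow> ('t, 'x) word set" where
  "Pone act = pcls act [Inl 1]"

definition Pplus :: "('t::monoid_mult \<Rightarrow> 'x::bounded_semilattice_inf_top \<Rightarrow> 'x)
    \<Rightarrow> ('t, 'x) word set \<Rightarrow> ('t, 'x) word set" where
  "Pplus act A = (\<Union>a\<in>A. pcls act [Inr (wplus act a)])"

definition PT :: "('t::monoid_mult \<Rightarrow> 'x::bounded_semilattice_inf_top \<Rightarrow> 'x)
    \<Rightarrow> 't \<Rightarrow> ('t, 'x) word set" where
  "PT act t = pcls act [Inl t]"

definition PX :: "('t::monoid_mult \<Rightarrow> 'x::bounded_semilattice_inf_top \<Rightarrow> 'x)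
    \<Rightarrow> 'x \<Rightarrow> ('t, 'x) word set" where
  "PX act e = pcls act [Inr e]"

text \<open>T-normal forms t_0 e_1 t_1 ... e_n t_n, represented by t_0 and the list
[(e_1,t_1),...,(e_n,t_n)].\<close>
definition nf_word :: "'t \<Rightarrow> ('x \<times> 't) list \<Rightarrow> ('t, 'x) word" where
  "nf_word t0 ps = Inl t0 # concat (map (\<lambda>(e, t). [Inr e, Inl t]) ps)"

definition is_Tnf :: "('t::monoid_mult \<Rightarrow> 'x::bounded_semilattice_inf_top \<Rightarrow> 'x)
    \<Rightarrow> 't \<Rightarrow> ('x \<times> 't) list \<Rightarrow> bool" where
  "is_Tnf act t0 ps \<longleftrightarrow>
     (\<forall>j < length ps. fst (ps ! j) \<noteq> top) \<and>
     (\<forall>j. Suc j < length ps \<longrightarrow> snd (ps ! j) \<noteq> 1) \<and>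
     (\<forall>j < length ps. fst (ps ! j) <
        wplus act (Inl (snd (ps ! j)) # concat (map (\<lambda>(e, t). [Inr e, Inl t]) (drop (Suc j) ps))))"

text \<open>a^* = e_n if n \<ge> 1 and t_n = 1 in the (unique) T-normal form of a; a^* = 1 otherwise.\<close>
definition Pstar :: "('t::monoid_mult \<Rightarrow> 'x::bounded_semilattice_inf_top \<Rightarrow> 'x)
    \<Rightarrow> ('t, 'x) word set \<Rightarrow> ('t, 'x) word set" where
  "Pstar act A =
     (if \<exists>t0 ps. is_Tnf act t0 ps \<and> pcls act (nf_word t0 ps) = A \<and> ps \<noteq> [] \<and> snd (last ps) = 1
      then PX act (fst (last (SOME ps. \<exists>t0. is_Tnf act t0 ps \<and> pcls act (nf_word t0 ps) = A
                                   \<and> ps \<noteq> [] \<and> snd (last ps) = 1)))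
      else Pone act)"

definition HP :: "('t::monoid_mult \<Rightarrow> 'x::bounded_semilattice_inf_top \<Rightarrow> 'x)
    \<Rightarrow> ('t, 'x) word set set" where
  "HP act = {Pmul act (PT act t) (PX act e) | t e. True}"

end

theory Submission
  imports Defs
begin

(* Every element of P_l(T,X) has exactly one T-normal form.  Existence and uniqueness both come
   from a left action of the letters of T*X on T-normal forms: t multiplies the leading entry t_0,
   while e meets the current value of (-)^+ and, if this strictly lowers it, is prepended as a new
   projection.  The action respects every defining relation of ~, so the normal form obtained
   from the empty one is an invariant of ~-classes.

   Regrouping t_0 e_1 t_1 ... e_n t_n as (t_0 e_1)(t_1 e_2) ... (t_{n-1} e_n)(t_n 1), where the
   last factor is dropped if n > 0 and t_n = 1, identifies T-normal forms with H^P-canonical forms: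
   the normal-form conditions e_i < (t_i e_{i+1} ...)^+ = t_i e_{i+1} are the canonical-form
   conditions, and alpha^+ and alpha^* are visible at the two ends.  Finally, the product of the
   T-letters of a word is a ~-invariant morphism onto T which identifies sigma-related elements,
   so sigma restricted to H^P relates te and sf exactly when t = s. *)

section \<open>Words modulo the congruence\<close>

lemmas [trans] = pc_trans sig_trans

lemma pcong_append_right: "pcong act u v \<Longrightarrow> pcong act (u @ w) (v @ w)"
  by (cases "w = []") (auto intro: pc_right)

lemma pcong_append_left: "pcong act u v \<Longrightarrow> pcong act (w @ u) (w @ v)"
  by (cases "w = []") (auto intro: pc_left)

lemma pcong_Cons: "pcong act u v \<Longrightarrow> pcong act (l # u) (l # v)"
  using pcong_append_left[of act u v "[l]"] by simp

lemma pcong_append: "pcong act u v \<Longrightarrow> pcong act u' v' \<Longrightarrow> pcong act (u @ u') (v @ v')"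
  by (meson pcong_append_left pcong_append_right pc_trans)

lemma wact_append: "wact act (u @ v) x = wact act u (wact act v x)"
  by (induction act u x rule: wact.induct) auto

lemma wplus_simps [simp]:
  "wplus act [] = top"
  "wplus act (Inl t # w) = act t (wplus act w)"
  "wplus act (Inr e # w) = inf e (wplus act w)"
  by (simp_all add: wplus_def)

lemma pcong_meet_wplus: "w \<noteq> [] \<Longrightarrow> pcong act (Inr f # w) (Inr (inf f (wplus act w)) # w)"
proof -
  assume w: "w \<noteq> []"
  have "pcong act (Inr f # w) ([Inr f, Inr (wplus act w)] @ w)"
    using pcong_Cons[OF pc_sym[OF pc_plus[OF w]]] by simp
  also have "pcong act \<dots> ([Inr (inf f (wplus act w))] @ w)"
    by (rule pcong_append_right) (rule pc_mergeX)
  finally show ?thesis by simp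
qed

lemma pcong_absorb: "w \<noteq> [] \<Longrightarrow> wplus act w \<le> e \<Longrightarrow> pcong act (Inr e # w) w"
  using pcong_meet_wplus[of w act e] pc_plus[of w act] by (auto simp: inf_absorb2 intro: pc_trans)

lemma pcong_one_left: "w \<noteq> [] \<Longrightarrow> pcong act (Inl 1 # w) w"
proof -
  assume w: "w \<noteq> []"
  have "pcong act ([Inl 1] @ w) ([Inr top] @ w)"
    by (rule pcong_append_right) (rule pc_one)
  also have "pcong act \<dots> w"
    using w by (simp add: pcong_absorb)
  finally show ?thesis by simp
qed

lemma pcong_one_right_letter: "pcong act [l, Inl 1] [l]"
proof (cases l)
  case (Inl s)
  then show ?thesis using pc_mergeT[of act s 1] by simp
next
  case (Inr f)
  have "pcong act [Inr f, Inl 1] [Inr f, Inr top]"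
    using pcong_Cons[OF pc_one[of act], of "Inr f"] by simp
  also have "pcong act \<dots> [Inr f]"
    using pc_mergeX[of act f top] by simp
  finally show ?thesis using Inr by simp
qed

lemma pcong_one_right: "w \<noteq> [] \<Longrightarrow> pcong act (w @ [Inl 1]) w"
proof -
  assume "w \<noteq> []"
  then obtain u l where w: "w = u @ [l]"
    by (metis append_butlast_last_id)
  show ?thesis
    using pcong_append_left[OF pcong_one_right_letter[of act l], of u] w by simp
qed

fun tcontent :: "('t::monoid_mult, 'x) word \<Rightarrow> 't" where
  "tcontent [] = 1"
| "tcontent (Inl t # w) = t * tcontent w"
| "tcontent (Inr e # w) = tcontent w"

lemma tcontent_append: "tcontent (u @ v) = tcontent u * tcontent v"
  by (induction u rule: tcontent.induct) (auto simp: mult.assoc)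

lemma pcong_tcontent: "pcong act u v \<Longrightarrow> tcontent u = tcontent v"
  by (induction rule: pcong.induct) (auto simp: tcontent_append)

section \<open>T-normal forms\<close>

type_synonym ('t, 'x) tnf = "'t \<times> ('x \<times> 't) list"

definition tail_word :: "('x \<times> 't) list \<Rightarrow> ('t, 'x) word" where
  "tail_word ps = concat (map (\<lambda>(e, t). [Inr e, Inl t]) ps)"

lemma tail_word_simps [simp]:
  "tail_word [] = []"
  "tail_word ((e, t) # ps) = Inr e # Inl t # tail_word ps"
  by (simp_all add: tail_word_def)

definition tnf_word :: "('t, 'x) tnf \<Rightarrow> ('t, 'x) word" where
  "tnf_word N = nf_word (fst N) (snd N)"

lemma tnf_word_simp [simp]: "tnf_word (t0, ps) = Inl t0 # tail_word ps"
  by (simp add: tnf_word_def nf_word_def tail_word_def)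

lemma tnf_word_nonempty [simp]: "tnf_word N \<noteq> []"
  by (cases N) simp

definition is_tnf :: "('t::monoid_mult \<Rightarrow> 'x::bounded_semilattice_inf_top \<Rightarrow> 'x)
    \<Rightarrow> ('t, 'x) tnf \<Rightarrow> bool" where
  "is_tnf act N \<longleftrightarrow> is_Tnf act (fst N) (snd N)"

lemma is_tnf_Nil [simp]: "is_tnf act (t0, [])"
  by (simp add: is_tnf_def is_Tnf_def)

lemma is_Tnf_Cons:
  "is_Tnf act t0 ((e, t) # ps) \<longleftrightarrow>
     e \<noteq> top \<and> (ps \<noteq> [] \<longrightarrow> t \<noteq> 1) \<and> e < wplus act (nf_word t ps) \<and> is_Tnf act t ps"
proof -
  have all_Cons: "(\<forall>j<length ((e, t) # ps). P (((e, t) # ps) ! j) (drop (Suc j) ((e, t) # ps)))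
      \<longleftrightarrow> P (e, t) ps \<and> (\<forall>j<length ps. P (ps ! j) (drop (Suc j) ps))" for P
    by (auto simp: less_Suc_eq_0_disj)
  have links_Cons: "(\<forall>j. Suc j < length ((e, t) # ps) \<longrightarrow> snd (((e, t) # ps) ! j) \<noteq> 1)
      \<longleftrightarrow> (ps \<noteq> [] \<longrightarrow> t \<noteq> 1) \<and> (\<forall>j. Suc j < length ps \<longrightarrow> snd (ps ! j) \<noteq> 1)"
    by (cases ps) (auto simp: nth_Cons split: nat.splits)
  show ?thesis
    unfolding is_Tnf_def nf_word_def
    using all_Cons[of "\<lambda>p q. fst p \<noteq> top"] links_Cons
      all_Cons[of "\<lambda>p q. fst p < wplus act (Inl (snd p) # concat (map (\<lambda>(e, t). [Inr e, Inl t]) q))"]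
    by auto
qed

lemma is_tnf_Cons:
  "is_tnf act (t0, (e, t) # ps) \<longleftrightarrow>
     e \<noteq> top \<and> (ps \<noteq> [] \<longrightarrow> t \<noteq> 1) \<and> e < wplus act (tnf_word (t, ps)) \<and> is_tnf act (t, ps)"
  by (simp add: is_tnf_def is_Tnf_Cons tnf_word_def)

lemma is_tnf_change_head: "is_tnf act (t0, ps) \<Longrightarrow> is_tnf act (t, ps)"
  by (cases ps) (auto simp: is_tnf_Cons)

(* If q < N^+, then tnf_below q N is the normal form of q N; a leading 1 e_1 of N is swallowed,
   since q < e_1 there. *)
fun tnf_below :: "'x \<Rightarrow> ('t::monoid_mult, 'x) tnf \<Rightarrow> ('t, 'x) tnf" where
  "tnf_below q (t0, []) = (1, [(q, t0)])"
| "tnf_below q (t0, (e, t) # ps) =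
     (if t0 = 1 then (1, (q, t) # ps) else (1, (q, t0) # (e, t) # ps))"

lemma tnf_below_tnf_below: "tnf_below q' (tnf_below q N) = tnf_below q' N"
  by (cases N; cases "snd N") auto

lemma tnf_below_eq: "t \<noteq> 1 \<or> ps = [] \<Longrightarrow> tnf_below q (t, ps) = (1, (q, t) # ps)"
  by (cases ps) auto

lemma inf_less_iff_not_le: "inf f p < p \<longleftrightarrow> \<not> p \<le> (f::'a::semilattice_inf)"
  by (simp add: less_le_not_le)

locale ordered_action =
  fixes act :: "'t::monoid_mult \<Rightarrow> 'x::bounded_semilattice_inf_top \<Rightarrow> 'x"
  assumes order_preserving: "order_preserving_action act"
begin

lemma act_one [simp]: "act 1 x = x"
  using order_preserving by (simp add: order_preserving_action_def)

lemma act_act: "act s (act t x) = act (s * t) x"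
  using order_preserving by (simp add: order_preserving_action_def)

lemma act_mono: "x \<le> y \<Longrightarrow> act t x \<le> act t y"
  using order_preserving by (simp add: order_preserving_action_def)

lemma wact_mono: "x \<le> y \<Longrightarrow> wact act w x \<le> wact act w y"
proof (induction w)
  case (Cons l w)
  then show ?case by (cases l) (auto intro: act_mono le_infI2)
qed simp

lemma pcong_wact: "pcong act u v \<Longrightarrow> wact act u = wact act v"
proof (induction rule: pcong.induct)
  case (pc_mergeT s t)
  then show ?case by (auto simp: act_act)
next
  case (pc_mergeX e f)
  then show ?case by (auto simp: inf_assoc)
next
  case (pc_plus w)
  show ?case
  proof
    fix x
    have "wact act w x \<le> wact act w top"
      by (rule wact_mono) simp
    then show "wact act (Inr (wplus act w) # w) x = wact act w x"
      by (simp add: wplus_def inf_absorb2)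
  qed
qed (auto simp: wact_append)

lemma pcong_wplus: "pcong act u v \<Longrightarrow> wplus act u = wplus act v"
  by (simp add: wplus_def pcong_wact)

lemma wplus_tnf_word_one_Cons:
  "is_tnf act (1, (e, t) # ps) \<Longrightarrow> wplus act (tnf_word (1, (e, t) # ps)) = e"
  by (auto simp: is_tnf_Cons inf_absorb1 less_imp_le)

lemma is_tnf_tnf_below:
  assumes N: "is_tnf act N" and q: "q < wplus act (tnf_word N)"
  shows "is_tnf act (tnf_below q N)"
proof -
  have q_top: "q \<noteq> top"
    using q by auto
  obtain t0 ps where N_eq: "N = (t0, ps)"
    by fastforce
  show ?thesis
  proof (cases "t0 = 1 \<and> ps \<noteq> []")
    case True
    then obtain e t ps' where ps: "ps = (e, t) # ps'" and t0: "t0 = 1"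
      by (metis list.exhaust prod.exhaust)
    have "q < e"
      using q N wplus_tnf_word_one_Cons by (simp add: N_eq ps t0)
    with N show ?thesis
      using q_top by (auto simp: N_eq ps t0 is_tnf_Cons intro: less_trans)
  next
    case False
    then have "tnf_below q N = (1, (q, t0) # ps)"
      by (auto simp: N_eq tnf_below_eq)
    then show ?thesis
      using N q q_top False by (auto simp: N_eq is_tnf_Cons)
  qed
qed

lemma pcong_tnf_below:
  assumes N: "is_tnf act N" and q: "q < wplus act (tnf_word N)"
  shows "pcong act (Inr q # tnf_word N) (tnf_word (tnf_below q N))"
proof -
  obtain t0 ps where N_eq: "N = (t0, ps)"
    by fastforce
  show ?thesis
  proof (cases "t0 = 1 \<and> ps \<noteq> []")
    case True
    then obtain e t ps' where ps: "ps = (e, t) # ps'" and t0: "t0 = 1"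
      by (metis list.exhaust prod.exhaust)
    have "q \<le> e"
      using q N wplus_tnf_word_one_Cons by (simp add: N_eq ps t0)
    have "pcong act (Inr q # tnf_word N) (Inr q # Inr e # Inl t # tail_word ps')"
      by (simp add: N_eq ps t0 pcong_Cons pcong_one_left)
    also have "pcong act \<dots> ([Inr (inf q e)] @ Inl t # tail_word ps')"
      using pcong_append_right[OF pc_mergeX] by simp
    also have "pcong act \<dots> (Inl 1 # Inr q # Inl t # tail_word ps')"
      using \<open>q \<le> e\<close> by (simp add: inf_absorb1 pc_sym pcong_one_left)
    finally show ?thesis
      by (simp add: N_eq ps t0)
  next
    case False
    then have "tnf_below q N = (1, (q, t0) # ps)"
      by (auto simp: N_eq tnf_below_eq)
    then show ?thesis
      by (simp add: N_eq pc_sym pcong_one_left)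
  qed
qed

fun tnf_Cons :: "'t + 'x \<Rightarrow> ('t, 'x) tnf \<Rightarrow> ('t, 'x) tnf" where
  "tnf_Cons (Inl s) (t0, ps) = (s * t0, ps)"
| "tnf_Cons (Inr f) N =
     (if wplus act (tnf_word N) \<le> f then N else tnf_below (inf f (wplus act (tnf_word N))) N)"

lemma is_tnf_tnf_Cons: "is_tnf act N \<Longrightarrow> is_tnf act (tnf_Cons l N)"
  by (induction l N rule: tnf_Cons.induct)
    (auto intro: is_tnf_change_head is_tnf_tnf_below simp: inf_less_iff_not_le)

lemma pcong_tnf_Cons: "is_tnf act N \<Longrightarrow> pcong act (l # tnf_word N) (tnf_word (tnf_Cons l N))"
proof (induction l N rule: tnf_Cons.induct)
  case (1 s t0 ps)
  have "pcong act ([Inl s, Inl t0] @ tail_word ps) ([Inl (s * t0)] @ tail_word ps)"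
    by (rule pcong_append_right) (rule pc_mergeT)
  then show ?case by simp
next
  case (2 f N)
  define p where "p = wplus act (tnf_word N)"
  show ?case
  proof (cases "p \<le> f")
    case True
    then show ?thesis
      by (simp add: p_def pcong_absorb)
  next
    case False
    have "pcong act (Inr f # tnf_word N) (Inr (inf f p) # tnf_word N)"
      unfolding p_def by (rule pcong_meet_wplus) simp
    also have "pcong act \<dots> (tnf_word (tnf_below (inf f p) N))"
      using 2 False by (intro pcong_tnf_below) (auto simp: p_def inf_less_iff_not_le)
    finally show ?thesis
      using False by (simp add: p_def)
  qed
qed

lemma tnf_Cons_inf:
  assumes N: "is_tnf act N"
  shows "tnf_Cons (Inr f) (tnf_Cons (Inr g) N) = tnf_Cons (Inr (inf f g)) N"
proof -
  define p where "p = wplus act (tnf_word N)"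
  show ?thesis
  proof (cases "p \<le> g")
    case True
    then have "p \<le> f \<longleftrightarrow> p \<le> inf f g" and "inf (inf f g) p = inf f p"
      by (auto simp: inf_absorb2 inf_assoc)
    with True show ?thesis
      by (simp add: p_def)
  next
    case False
    define N' where "N' = tnf_Cons (Inr g) N"
    have N': "N' = tnf_below (inf g p) N"
      using False by (simp add: N'_def p_def)
    have "wplus act (tnf_word N') = inf g p"
      using pcong_wplus[OF pcong_tnf_Cons[OF N, of "Inr g"]] by (simp add: N'_def p_def)
    then have "tnf_Cons (Inr f) N' = tnf_below (inf f (inf g p)) N"
      by (auto simp: N' tnf_below_tnf_below inf_absorb2)
    moreover have "tnf_Cons (Inr (inf f g)) N = tnf_below (inf f (inf g p)) N"
      using False by (simp add: p_def inf_assoc)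
    ultimately show ?thesis
      by (simp add: N'_def)
  qed
qed

lemma is_tnf_foldr_tnf_Cons: "is_tnf act N \<Longrightarrow> is_tnf act (foldr tnf_Cons w N)"
  by (induction w) (auto intro: is_tnf_tnf_Cons)

lemma pcong_foldr_tnf_Cons:
  "is_tnf act N \<Longrightarrow> pcong act (w @ tnf_word N) (tnf_word (foldr tnf_Cons w N))"
proof (induction w)
  case Nil
  then show ?case by (simp add: pc_refl)
next
  case (Cons l w)
  have "pcong act (l # w @ tnf_word N) (l # tnf_word (foldr tnf_Cons w N))"
    by (rule pcong_Cons[OF Cons.IH[OF Cons.prems]])
  also have "pcong act \<dots> (tnf_word (tnf_Cons l (foldr tnf_Cons w N)))"
    using Cons.prems by (intro pcong_tnf_Cons is_tnf_foldr_tnf_Cons)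
  finally show ?case by simp
qed

lemma foldr_tnf_Cons_pcong:
  "pcong act u v \<Longrightarrow> is_tnf act N \<Longrightarrow> foldr tnf_Cons u N = foldr tnf_Cons v N"
proof (induction arbitrary: N rule: pcong.induct)
  case (pc_mergeT s t)
  then show ?case by (cases N) (simp add: mult.assoc)
next
  case (pc_mergeX e f)
  then show ?case by (simp add: tnf_Cons_inf del: tnf_Cons.simps)
next
  case (pc_plus w)
  have "wplus act (tnf_word (foldr tnf_Cons w N)) = wact act w (wplus act (tnf_word N))"
    using pcong_wplus[OF pcong_foldr_tnf_Cons[OF pc_plus.prems]] by (simp add: wplus_def wact_append)
  also have "\<dots> \<le> wplus act w"
    unfolding wplus_def by (rule wact_mono) simp
  finally show ?case by simp
next
  case pc_one
  then show ?case by (cases N) simp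
next
  case (pc_right u v w)
  then show ?case by (simp add: is_tnf_foldr_tnf_Cons)
qed auto

definition tnf_of :: "('t, 'x) word \<Rightarrow> ('t, 'x) tnf" where
  "tnf_of w = foldr tnf_Cons w (1, [])"

lemma is_tnf_tnf_of: "is_tnf act (tnf_of w)"
  by (simp add: tnf_of_def is_tnf_foldr_tnf_Cons)

lemma pcong_tnf_of: "w \<noteq> [] \<Longrightarrow> pcong act w (tnf_word (tnf_of w))"
proof -
  assume "w \<noteq> []"
  then have "pcong act w (w @ tnf_word (1, []))"
    by (simp add: pc_sym pcong_one_right)
  also have "pcong act \<dots> (tnf_word (tnf_of w))"
    unfolding tnf_of_def by (rule pcong_foldr_tnf_Cons) simp
  finally show ?thesis .
qed

lemma tnf_of_tnf_word: "is_tnf act (t0, ps) \<Longrightarrow> tnf_of (tnf_word (t0, ps)) = (t0, ps)"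
proof (induction ps arbitrary: t0)
  case (Cons et ps)
  obtain e t where et: "et = (e, t)"
    by fastforce
  have hyps: "ps \<noteq> [] \<longrightarrow> t \<noteq> 1" "e < wplus act (tnf_word (t, ps))" "is_tnf act (t, ps)"
    using Cons.prems by (simp_all add: et is_tnf_Cons)
  have "tnf_Cons (Inr e) (t, ps) = (1, (e, t) # ps)"
    using hyps by (auto simp: inf_absorb1 less_imp_le tnf_below_eq)
  then show ?case
    using Cons.IH[OF hyps(3)] by (simp add: et tnf_of_def)
qed (simp add: tnf_of_def)

theorem tnf_unique:
  assumes "is_tnf act N" "is_tnf act M" "pcong act (tnf_word N) (tnf_word M)"
  shows "N = M"
proof -
  have "tnf_of (tnf_word N) = tnf_of (tnf_word M)"
    unfolding tnf_of_def using assms(3) by (rule foldr_tnf_Cons_pcong) simp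
  then show ?thesis
    using assms(1,2) tnf_of_tnf_word by (metis prod.collapse)
qed

end

section \<open>The monoid P_l(T,X)\<close>

lemma mem_pcls: "v \<in> pcls act w \<longleftrightarrow> pcong act w v"
  by (simp add: pcls_def)

lemma pcls_eq: "pcong act u v \<Longrightarrow> pcls act u = pcls act v"
  unfolding pcls_def by (blast intro: pc_sym pc_trans)

lemma pcls_self: "w \<noteq> [] \<Longrightarrow> w \<in> pcls act w"
  by (simp add: mem_pcls pc_refl)

lemma pcls_eq_iff: "u \<noteq> [] \<Longrightarrow> pcls act u = pcls act v \<longleftrightarrow> pcong act u v"
  by (metis mem_pcls pc_sym pcls_eq pcls_self)

lemma pcls_in_Pcar: "w \<noteq> [] \<Longrightarrow> pcls act w \<in> Pcar act"
  unfolding Pcar_def by blast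

lemma PcarE: "A \<in> Pcar act \<Longrightarrow> (\<And>w. w \<noteq> [] \<Longrightarrow> A = pcls act w \<Longrightarrow> P) \<Longrightarrow> P"
  unfolding Pcar_def by blast

lemma Pmul_pcls: "u \<noteq> [] \<Longrightarrow> v \<noteq> [] \<Longrightarrow> Pmul act (pcls act u) (pcls act v) = pcls act (u @ v)"
proof -
  assume u: "u \<noteq> []" and v: "v \<noteq> []"
  have "pcls act (a @ b) = pcls act (u @ v)" if "a \<in> pcls act u" "b \<in> pcls act v" for a b
    using that by (auto simp: mem_pcls intro!: pcls_eq pc_sym[OF pcong_append])
  then show ?thesis
    unfolding Pmul_def using pcls_self[OF u, of act] pcls_self[OF v, of act] by blast
qed

lemma tcontent_mem_pcls: "v \<in> pcls act w \<Longrightarrow> tcontent v = tcontent w"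
  by (simp add: mem_pcls pcong_tcontent)

lemma PX_mult_PX: "Pmul act (PX act e) (PX act f) = PX act (inf e f)"
  unfolding PX_def by (simp add: Pmul_pcls pcls_eq[OF pc_mergeX])

lemma Pone_eq_PX: "Pone act = PX act top"
  unfolding Pone_def PX_def by (rule pcls_eq) (rule pc_one)

definition Pte :: "('t::monoid_mult \<Rightarrow> 'x::bounded_semilattice_inf_top \<Rightarrow> 'x)
    \<Rightarrow> 't \<Rightarrow> 'x \<Rightarrow> ('t, 'x) word set" where
  "Pte act t e = Pmul act (PT act t) (PX act e)"

lemma HP_eq: "HP act = {Pte act t e | t e. True}"
  by (simp add: HP_def Pte_def)

lemma Pte_pcls: "Pte act t e = pcls act [Inl t, Inr e]"
  by (simp add: Pte_def PT_def PX_def Pmul_pcls)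

lemma Pte_in_Pcar: "Pte act t e \<in> Pcar act"
  by (simp add: Pte_pcls pcls_in_Pcar)

lemma PX_eq_Pte: "PX act e = Pte act 1 e"
  unfolding PX_def Pte_pcls by (rule pcls_eq) (simp add: pc_sym pcong_one_left)

lemma PT_eq_Pte: "PT act t = Pte act t top"
proof -
  have "pcong act [Inl t, Inr top] [Inl t, Inl 1]"
    using pcong_Cons[OF pc_sym[OF pc_one[of act]], of "Inl t"] by simp
  also have "pcong act \<dots> [Inl t]"
    by (rule pcong_one_right_letter)
  finally show ?thesis
    unfolding PT_def Pte_pcls by (simp add: pcls_eq pc_sym)
qed

lemma Pte_mult_PX: "Pmul act (Pte act t e) (PX act f) = Pte act t (inf e f)"
proof -
  have "pcong act ([Inl t] @ [Inr e, Inr f]) ([Inl t] @ [Inr (inf e f)])"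
    by (rule pcong_append_left) (rule pc_mergeX)
  then show ?thesis
    unfolding Pte_pcls PX_def by (simp add: Pmul_pcls pcls_eq)
qed

lemma Pte_mult_Pte_absorb:
  assumes "act s f \<le> e"
  shows "Pmul act (Pte act t e) (Pte act s f) = Pte act (t * s) f"
proof -
  have "pcong act ([Inl t] @ [Inr e, Inl s, Inr f]) ([Inl t] @ [Inl s, Inr f])"
    using assms by (intro pcong_append_left pcong_absorb) simp_all
  also have "pcong act \<dots> ([Inl (t * s)] @ [Inr f])"
    using pcong_append_right[OF pc_mergeT] by simp
  finally show ?thesis
    unfolding Pte_pcls by (simp add: Pmul_pcls pcls_eq)
qed

definition Ptcontent :: "('t::monoid_mult, 'x) word set \<Rightarrow> 't" where
  "Ptcontent A = tcontent (SOME w. w \<in> A)"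

lemma Ptcontent_pcls:
  assumes "w \<noteq> []"
  shows "Ptcontent (pcls act w) = tcontent w"
proof -
  have "(SOME v. v \<in> pcls act w) \<in> pcls act w"
    using pcls_self[OF assms] by (rule someI)
  then show ?thesis
    unfolding Ptcontent_def by (rule tcontent_mem_pcls)
qed

lemma Ptcontent_Pte: "Ptcontent (Pte act t e) = t"
  by (simp add: Pte_pcls Ptcontent_pcls)

lemma Pmul_in_Pcar: "a \<in> Pcar act \<Longrightarrow> b \<in> Pcar act \<Longrightarrow> Pmul act a b \<in> Pcar act"
  by (auto elim!: PcarE simp: Pmul_pcls pcls_in_Pcar)

lemma Ptcontent_Pmul:
  "a \<in> Pcar act \<Longrightarrow> b \<in> Pcar act \<Longrightarrow> Ptcontent (Pmul act a b) = Ptcontent a * Ptcontent b"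
  by (auto elim!: PcarE simp: Pmul_pcls Ptcontent_pcls tcontent_append)

lemma Pte_in_range_PX_iff: "Pte act t e \<in> range (PX act) \<longleftrightarrow> t = 1"
  by (metis PX_eq_Pte Ptcontent_Pte rangeE rangeI)

context ordered_action
begin

lemma Pplus_pcls: "w \<noteq> [] \<Longrightarrow> Pplus act (pcls act w) = PX act (wplus act w)"
proof -
  assume w: "w \<noteq> []"
  have "wplus act a = wplus act w" if "a \<in> pcls act w" for a
    using that by (simp add: mem_pcls pcong_wplus)
  then have "Pplus act (pcls act w) = (\<Union>a\<in>pcls act w. pcls act [Inr (wplus act w)])"
    unfolding Pplus_def by simp
  also have "\<dots> = PX act (wplus act w)"
    using pcls_self[OF w, of act] by (auto simp: PX_def)
  finally show ?thesis .
qed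

lemma projs_Pcar: "projs (Pcar act) (Pplus act) = range (PX act)"
proof
  show "projs (Pcar act) (Pplus act) \<subseteq> range (PX act)"
    unfolding projs_def by (auto elim!: PcarE simp: Pplus_pcls)
  have "PX act e = Pplus act (PX act e)" for e
    by (simp add: PX_def Pplus_pcls)
  then show "range (PX act) \<subseteq> projs (Pcar act) (Pplus act)"
    unfolding projs_def PX_def by (auto intro: pcls_in_Pcar)
qed

lemma PX_inj: "PX act e = PX act f \<Longrightarrow> e = f"
proof -
  assume "PX act e = PX act f"
  then have "pcong act [Inr e] [Inr f]"
    unfolding PX_def by (simp add: pcls_eq_iff)
  then have "tnf_of [Inr e] = tnf_of [Inr f]"
    unfolding tnf_of_def by (rule foldr_tnf_Cons_pcong) simp
  then show ?thesis
    by (auto simp: tnf_of_def top_unique split: if_splits)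
qed

lemma ple_PX_iff: "ple (Pmul act) (PX act e) (PX act f) \<longleftrightarrow> e \<le> f"
  unfolding ple_def PX_mult_PX using PX_inj by (metis inf.absorb_iff1)

lemma plt_PX_iff: "plt (Pmul act) (PX act e) (PX act f) \<longleftrightarrow> e < f"
  unfolding plt_def ple_PX_iff using PX_inj by (auto simp: less_le)

lemma Pplus_Pte: "Pplus act (Pte act t e) = PX act (act t e)"
  by (simp add: Pte_pcls Pplus_pcls)

lemma Pstar_pcls_tnf_word:
  assumes N: "is_tnf act (t0, ps)"
  shows "Pstar act (pcls act (tnf_word (t0, ps))) =
    (if ps \<noteq> [] \<and> snd (last ps) = 1 then PX act (fst (last ps)) else PX act top)"
proof -
  have same_tail: "ps' = ps"
    if "is_Tnf act t' ps'" "pcls act (nf_word t' ps') = pcls act (nf_word t0 ps)" for t' ps'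
  proof -
    have "pcong act (tnf_word (t', ps')) (tnf_word (t0, ps))"
      using that(2) by (simp add: tnf_word_def nf_word_def pcls_eq_iff)
    then show ?thesis
      using tnf_unique that(1) N by (fastforce simp: is_tnf_def)
  qed
  have N': "is_Tnf act t0 ps"
    using N by (simp add: is_tnf_def)
  let ?P = "\<lambda>ps'. \<exists>t'. is_Tnf act t' ps' \<and> pcls act (nf_word t' ps') = pcls act (nf_word t0 ps)
    \<and> ps' \<noteq> [] \<and> snd (last ps') = 1"
  show ?thesis
  proof (cases "ps \<noteq> [] \<and> snd (last ps) = 1")
    case True
    then have "?P ps"
      using N' by blast
    moreover have "(SOME ps'. ?P ps') = ps"
      using \<open>?P ps\<close> same_tail by (intro some_equality) blast+
    ultimately show ?thesis
      unfolding tnf_word_def Pstar_def using True by auto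
  next
    case False
    then have "\<not> (\<exists>ps'. ?P ps')"
      using same_tail by blast
    then show ?thesis
      unfolding tnf_word_def Pstar_def Pone_eq_PX using False by auto
  qed
qed

end

section \<open>Canonical forms\<close>

lemma canonical_single: "canonical C mul pl st H [h] \<longleftrightarrow> h \<in> H"
  by (simp add: canonical_def)

lemma canonical_Cons_Cons:
  "canonical C mul pl st H (h # h' # hs) \<longleftrightarrow>
     h \<in> H \<and> plt mul (st h) (pl h') \<and> h' \<notin> projs C pl \<and> canonical C mul pl st H (h' # hs)"
proof -
  have links: "(\<forall>i. Suc i < length (h # h' # hs) \<longrightarrow> P i) \<longleftrightarrow>
      P 0 \<and> (\<forall>i. Suc i < length (h' # hs) \<longrightarrow> P (Suc i))" for P
    by (metis length_Cons less_Suc_eq_0_disj Suc_less_eq zero_less_Suc)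
  have tail: "(\<forall>i. 0 < i \<and> i < length (h # h' # hs) \<longrightarrow> Q ((h # h' # hs) ! i)) \<longleftrightarrow>
      Q h' \<and> (\<forall>i. 0 < i \<and> i < length (h' # hs) \<longrightarrow> Q ((h' # hs) ! i))" for Q
    by (auto simp: nth_Cons' gr0_conv_Suc)
  show ?thesis
    unfolding canonical_def
    using links[of "\<lambda>i. plt mul (st ((h # h' # hs) ! i)) (pl ((h # h' # hs) ! Suc i))"]
      tail[of "\<lambda>x. x \<notin> projs C pl"] by auto
qed

lemma ex_map_Pte_iff: "(\<exists>cs. hs = map (case_prod (Pte act)) cs) \<longleftrightarrow> set hs \<subseteq> HP act"
  by (auto simp: ex_map_conv HP_eq)

definition te_word :: "('t \<times> 'x) list \<Rightarrow> ('t, 'x) word" where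
  "te_word cs = concat (map (\<lambda>(t, e). [Inl t, Inr e]) cs)"

lemma te_word_simps [simp]:
  "te_word [] = []"
  "te_word ((t, e) # cs) = Inl t # Inr e # te_word cs"
  by (simp_all add: te_word_def)

lemma lprod_map_Pte:
  "cs \<noteq> [] \<Longrightarrow> lprod (Pmul act) (map (case_prod (Pte act)) cs) = pcls act (te_word cs)"
proof (induction cs rule: induct_list012)
  case (3 c c' cs)
  then show ?case
    by (cases c; cases c') (simp add: Pte_pcls Pmul_pcls)
qed (auto simp: Pte_pcls)

(* (t_1 e_1) ... (t_k e_k) read as the T-normal form t_1 e_1 t_2 e_2 ... t_k e_k 1. *)
fun te_tnf :: "('t::monoid_mult \<times> 'x::bounded_semilattice_inf_top) list \<Rightarrow> ('t, 'x) tnf" where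
  "te_tnf [] = (1, [])"
| "te_tnf [(t, e)] = (if e = top then (t, []) else (t, [(e, 1)]))"
| "te_tnf ((t, e) # c # cs) = (t, (e, fst c) # snd (te_tnf (c # cs)))"

lemma fst_te_tnf: "cs \<noteq> [] \<Longrightarrow> fst (te_tnf cs) = fst (hd cs)"
  by (induction cs rule: te_tnf.induct) auto

lemma pcong_te_word: "cs \<noteq> [] \<Longrightarrow> pcong act (te_word cs) (tnf_word (te_tnf cs))"
proof (induction cs rule: te_tnf.induct)
  case (2 t e)
  show ?case
  proof (cases "e = top")
    case True
    have "pcong act [Inl t, Inr top] [Inl t, Inl 1]"
      using pcong_Cons[OF pc_sym[OF pc_one[of act]], of "Inl t"] by simp
    also have "pcong act \<dots> [Inl t]"
      by (rule pcong_one_right_letter)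
    finally show ?thesis
      using True by simp
  next
    case False
    have "pcong act [Inl t, Inr e] ([Inl t, Inr e] @ [Inl 1])"
      by (rule pc_sym, rule pcong_one_right) simp
    then show ?thesis
      using False by simp
  qed
next
  case (3 t e c cs)
  have "pcong act ([Inl t, Inr e] @ te_word (c # cs)) ([Inl t, Inr e] @ tnf_word (te_tnf (c # cs)))"
    using 3 by (intro pcong_append_left) auto
  moreover have "tnf_word (te_tnf (c # cs)) = Inl (fst c) # tail_word (snd (te_tnf (c # cs)))"
    using fst_te_tnf[of "c # cs"] by (cases "te_tnf (c # cs)") simp
  ultimately show ?case
    by (cases c) simp
qed simp

fun tnf_te :: "('t::monoid_mult, 'x::bounded_semilattice_inf_top) tnf \<Rightarrow> ('t \<times> 'x) list" where
  "tnf_te (t0, []) = [(t0, top)]"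
| "tnf_te (t0, (e, t) # ps) = (if t = 1 \<and> ps = [] then [(t0, e)] else (t0, e) # tnf_te (t, ps))"

lemma tnf_te_nonempty_hd: "tnf_te N \<noteq> [] \<and> fst (hd (tnf_te N)) = fst N"
  by (induction N rule: tnf_te.induct) auto

context ordered_action
begin

abbreviation Pcanonical :: "('t, 'x) word set list \<Rightarrow> bool" where
  "Pcanonical \<equiv> canonical (Pcar act) (Pmul act) (Pplus act) (Pstar act) (HP act)"

fun canonical_pairs :: "('t \<times> 'x) list \<Rightarrow> bool" where
  "canonical_pairs [] = False"
| "canonical_pairs [c] = True"
| "canonical_pairs ((t, e) # (t', e') # cs) \<longleftrightarrow>
     e < act t' e' \<and> t' \<noteq> 1 \<and> canonical_pairs ((t', e') # cs)"

lemma canonical_pairs_nonempty: "canonical_pairs cs \<Longrightarrow> cs \<noteq> []"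
  by (cases cs) auto

lemma wplus_te_word:
  "canonical_pairs cs \<Longrightarrow> wplus act (te_word cs) = act (fst (hd cs)) (snd (hd cs))"
  by (induction cs rule: canonical_pairs.induct) (auto simp: inf_absorb1 less_imp_le)

lemma is_tnf_te_tnf: "canonical_pairs cs \<Longrightarrow> is_tnf act (te_tnf cs)"
proof (induction cs rule: canonical_pairs.induct)
  case (2 c)
  then show ?case
    by (cases c) (auto simp: is_tnf_Cons less_le)
next
  case (3 t e t' e' cs)
  then have hyps: "e < act t' e'" "t' \<noteq> 1" "canonical_pairs ((t', e') # cs)"
    by simp_all
  obtain ps where ps: "te_tnf ((t', e') # cs) = (t', ps)"
    using fst_te_tnf[of "(t', e') # cs"] by (cases "te_tnf ((t', e') # cs)") simp
  have "wplus act (tnf_word (t', ps)) = act t' e'"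
    using pcong_wplus[OF pcong_te_word[of "(t', e') # cs"]] wplus_te_word[OF hyps(3)] by (simp add: ps)
  then show ?case
    using 3 hyps ps by (auto simp: is_tnf_Cons)
qed simp

lemma te_tnf_tnf_te: "is_tnf act N \<Longrightarrow> te_tnf (tnf_te N) = N"
proof (induction N rule: tnf_te.induct)
  case (2 t0 e t ps)
  show ?case
  proof (cases "t = 1 \<and> ps = []")
    case True
    then show ?thesis
      using "2.prems" by (auto simp: is_tnf_Cons)
  next
    case False
    obtain c cs where cs: "tnf_te (t, ps) = c # cs" and "fst c = t"
      using tnf_te_nonempty_hd[of "(t, ps)"] by (cases "tnf_te (t, ps)") auto
    then show ?thesis
      using False "2.IH" "2.prems" by (simp add: is_tnf_Cons)
  qed
qed simp

lemma tnf_te_te_tnf: "canonical_pairs cs \<Longrightarrow> tnf_te (te_tnf cs) = cs"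
proof (induction cs rule: canonical_pairs.induct)
  case (3 t e t' e' cs)
  obtain ps where "te_tnf ((t', e') # cs) = (t', ps)"
    using fst_te_tnf[of "(t', e') # cs"] by (cases "te_tnf ((t', e') # cs)") simp
  then show ?case
    using 3 by simp
next
  case (2 c)
  then show ?case by (cases c) auto
qed simp

lemma canonical_pairs_tnf_te: "is_tnf act N \<Longrightarrow> canonical_pairs (tnf_te N)"
proof (induction N rule: tnf_te.induct)
  case (2 t0 e t ps)
  show ?case
  proof (cases "t = 1 \<and> ps = []")
    case False
    have hyps: "ps \<noteq> [] \<longrightarrow> t \<noteq> 1" "e < wplus act (tnf_word (t, ps))" "is_tnf act (t, ps)"
      using "2.prems" by (simp_all add: is_tnf_Cons)
    then have canon: "canonical_pairs (tnf_te (t, ps))"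
      using "2.IH" False by simp
    obtain e' cs where cs: "tnf_te (t, ps) = (t, e') # cs"
      using tnf_te_nonempty_hd[of "(t, ps)"] by (cases "tnf_te (t, ps)") auto
    have "wplus act (tnf_word (t, ps)) = wplus act (te_word (tnf_te (t, ps)))"
      using pcong_wplus[OF pcong_te_word[of "tnf_te (t, ps)"]] te_tnf_tnf_te[OF hyps(3)] cs by simp
    also have "\<dots> = act t e'"
      using wplus_te_word[OF canon] cs by simp
    finally show ?thesis
      using False hyps canon cs by auto
  qed simp
qed simp

lemma last_te_tnf:
  "canonical_pairs cs \<Longrightarrow>
     (if snd (te_tnf cs) \<noteq> [] \<and> snd (last (snd (te_tnf cs))) = 1
      then fst (last (snd (te_tnf cs))) else top) = snd (last cs)"
proof (induction cs rule: canonical_pairs.induct)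
  case (3 t e t' e' cs)
  then show ?case
    by (cases "snd (te_tnf ((t', e') # cs)) = []") auto
next
  case (2 c)
  then show ?case by (cases c) auto
qed simp

lemma Pplus_te_word:
  "canonical_pairs cs \<Longrightarrow>
     Pplus act (pcls act (te_word cs)) = PX act (act (fst (hd cs)) (snd (hd cs)))"
  using Pplus_pcls[of "te_word cs"] wplus_te_word canonical_pairs_nonempty by (cases cs) auto

lemma Pstar_te_word:
  "canonical_pairs cs \<Longrightarrow> Pstar act (pcls act (te_word cs)) = PX act (snd (last cs))"
proof -
  assume cs: "canonical_pairs cs"
  obtain t0 ps where N: "te_tnf cs = (t0, ps)"
    by fastforce
  have "pcls act (te_word cs) = pcls act (tnf_word (t0, ps))"
    using pcls_eq[OF pcong_te_word[OF canonical_pairs_nonempty[OF cs]]] by (simp add: N)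
  then have "Pstar act (pcls act (te_word cs)) =
      (if ps \<noteq> [] \<and> snd (last ps) = 1 then PX act (fst (last ps)) else PX act top)"
    using Pstar_pcls_tnf_word[of t0 ps] is_tnf_te_tnf[OF cs] by (simp add: N)
  also have "\<dots> = PX act (snd (last cs))"
    using last_te_tnf[OF cs] unfolding N snd_conv by (cases "ps \<noteq> [] \<and> snd (last ps) = 1") auto
  finally show ?thesis .
qed

lemma Pstar_Pte: "Pstar act (Pte act t e) = PX act e"
  using Pstar_te_word[of "[(t, e)]"] by (simp add: Pte_pcls)

lemma canonical_map_Pte_iff:
  "Pcanonical (map (case_prod (Pte act)) cs) \<longleftrightarrow> canonical_pairs cs"
proof (induction cs rule: canonical_pairs.induct)
  case 1
  then show ?case by (simp add: canonical_def)
next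
  case (2 c)
  then show ?case by (cases c) (auto simp: canonical_single HP_eq)
next
  case (3 t e t' e' cs)
  have "Pte act t e \<in> HP act"
    by (auto simp: HP_eq)
  then show ?case
    using 3 by (simp add: canonical_Cons_Cons Pstar_Pte Pplus_Pte plt_PX_iff projs_Pcar
        Pte_in_range_PX_iff)
qed

lemma canonical_HP_iff:
  "Pcanonical hs \<longleftrightarrow> (\<exists>cs. hs = map (case_prod (Pte act)) cs \<and> canonical_pairs cs)"
proof
  assume hs: "Pcanonical hs"
  then obtain cs where "hs = map (case_prod (Pte act)) cs"
    using ex_map_Pte_iff by (metis canonical_def)
  with hs show "\<exists>cs. hs = map (case_prod (Pte act)) cs \<and> canonical_pairs cs"
    using canonical_map_Pte_iff by blast
qed (use canonical_map_Pte_iff in blast)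

lemma ex_canonical_pairs:
  "a \<in> Pcar act \<Longrightarrow> \<exists>cs. canonical_pairs cs \<and> a = pcls act (te_word cs)"
proof (elim PcarE)
  fix w
  assume w: "w \<noteq> []" and a: "a = pcls act w"
  define cs where "cs = tnf_te (tnf_of w)"
  have "cs \<noteq> []"
    using tnf_te_nonempty_hd[of "tnf_of w"] by (simp add: cs_def)
  then have "pcls act (te_word cs) = pcls act (tnf_word (te_tnf cs))"
    by (intro pcls_eq pcong_te_word)
  also have "\<dots> = pcls act (tnf_word (tnf_of w))"
    using te_tnf_tnf_te[OF is_tnf_tnf_of] by (simp add: cs_def)
  also have "\<dots> = a"
    using a pcls_eq[OF pcong_tnf_of[OF w]] by simp
  finally show ?thesis
    using canonical_pairs_tnf_te[OF is_tnf_tnf_of] cs_def by blast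
qed

lemma canonical_pairs_unique:
  assumes "canonical_pairs cs" "canonical_pairs cs'" "pcls act (te_word cs) = pcls act (te_word cs')"
  shows "cs = cs'"
proof -
  have "pcls act (tnf_word (te_tnf cs)) = pcls act (tnf_word (te_tnf cs'))"
    using assms pcls_eq[OF pcong_te_word] canonical_pairs_nonempty by metis
  then have "pcong act (tnf_word (te_tnf cs)) (tnf_word (te_tnf cs'))"
    by (simp add: pcls_eq_iff)
  then have "te_tnf cs = te_tnf cs'"
    using assms by (intro tnf_unique is_tnf_te_tnf)
  then show ?thesis
    using assms tnf_te_te_tnf by metis
qed

section \<open>The congruence sigma\<close>

abbreviation Psigma :: "('t, 'x) word set \<Rightarrow> ('t, 'x) word set \<Rightarrow> bool" where
  "Psigma \<equiv> sigma (Pcar act) (Pmul act) (Pplus act)"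

lemma sigma_in_Pcar:
  "Psigma a b \<Longrightarrow> a \<in> Pcar act \<and> b \<in> Pcar act"
  by (induction rule: sigma.induct) (auto simp: projs_Pcar PX_def pcls_in_Pcar Pmul_in_Pcar)

lemma sigma_Ptcontent:
  "Psigma a b \<Longrightarrow> Ptcontent a = Ptcontent b"
  by (induction rule: sigma.induct)
    (auto simp: projs_Pcar PX_def Ptcontent_pcls Ptcontent_Pmul dest: sigma_in_Pcar)

lemma sigma_Pte_imp_eq: "Psigma (Pte act t e) (Pte act s f) \<Longrightarrow> t = s"
  using sigma_Ptcontent by (fastforce simp: Ptcontent_Pte)

lemma sigma_pcls_PT:
  "w \<noteq> [] \<Longrightarrow> Psigma (pcls act w) (PT act (tcontent w))"
proof (induction w)
  case (Cons l w)
  have letter: "Psigma (pcls act [l]) (PT act (tcontent [l]))"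
  proof (cases l)
    case (Inl t)
    then show ?thesis by (simp add: PT_def sig_refl pcls_in_Pcar)
  next
    case (Inr e)
    have "PT act 1 = PX act top"
      using Pone_eq_PX by (simp add: Pone_def PT_def)
    then show ?thesis
      using Inr by (simp add: projs_Pcar PX_def[symmetric] sig_base)
  qed
  show ?case
  proof (cases "w = []")
    case True
    then show ?thesis using letter by simp
  next
    case False
    then have "pcls act (l # w) = Pmul act (pcls act [l]) (pcls act w)"
      by (simp add: Pmul_pcls)
    also have "Psigma \<dots> (Pmul act (pcls act [l]) (PT act (tcontent w)))"
      using Cons False by (simp add: sig_left pcls_in_Pcar)
    also have "Psigma \<dots> (Pmul act (PT act (tcontent [l])) (PT act (tcontent w)))"
      using letter by (simp add: sig_right pcls_in_Pcar PT_def)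
    also have "Pmul act (PT act (tcontent [l])) (PT act (tcontent w)) = PT act (tcontent (l # w))"
      using tcontent_append[of "[l]" w] by (simp add: PT_def Pmul_pcls pcls_eq[OF pc_mergeT])
    finally show ?thesis .
  qed
qed simp

lemma sigma_Pte_PT: "Psigma (Pte act t e) (PT act t)"
  using sigma_pcls_PT[of "[Inl t, Inr e]"] by (simp add: Pte_pcls)

section \<open>The basis H^P\<close>

lemma atomic_HP: "atomic (Pcar act) (Pmul act) (Pplus act) (Pstar act) (HP act)"
  unfolding atomic_def
proof (intro conjI ballI impI)
  show "HP act \<subseteq> Pcar act"
    by (auto simp: HP_eq Pte_in_Pcar)
  show "projs (Pcar act) (Pplus act) \<subseteq> HP act"
    by (auto simp: projs_Pcar HP_eq PX_eq_Pte)
next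
  fix h p
  assume "h \<in> HP act" "p \<in> projs (Pcar act) (Pplus act)"
  then obtain t e f where hp: "h = Pte act t e" "p = PX act f"
    by (auto simp: HP_eq projs_Pcar)
  then show "Pmul act h p \<in> HP act"
    by (auto simp: HP_eq Pte_mult_PX)
  show "Pstar act (Pmul act h p) = Pmul act (Pstar act h) p"
    by (simp add: hp Pte_mult_PX Pstar_Pte PX_mult_PX)
next
  fix h k
  assume "h \<in> HP act" "k \<in> HP act - projs (Pcar act) (Pplus act)"
    and le: "ple (Pmul act) (Pplus act k) (Pstar act h)"
  then obtain t e s f where hk: "h = Pte act t e" "k = Pte act s f"
    by (auto simp: HP_eq)
  with le have "Pmul act h k = Pte act (t * s) f"
    by (simp add: Pplus_Pte Pstar_Pte ple_PX_iff Pte_mult_Pte_absorb)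
  then show "Pmul act h k \<in> HP act" "Pstar act (Pmul act h k) = Pstar act k"
    by (auto simp: HP_eq Pstar_Pte hk)
next
  fix m
  assume "m \<in> Pcar act"
  then obtain w where "w \<noteq> []" "m = pcls act w"
    by (rule PcarE)
  then have "Psigma m (Pte act (tcontent w) top)"
    using sigma_pcls_PT by (simp add: PT_eq_Pte)
  then show "\<exists>h\<in>HP act. Psigma m h"
    by (auto simp: HP_eq)
next
  fix h k w
  assume "h \<in> HP act" "k \<in> HP act" "w \<in> HP act"
    "Psigma (Pmul act h k) w \<and> Pstar act k = Pstar act w"
  then obtain t e s f where hk: "h = Pte act t e" "k = Pte act s f"
    by (auto simp: HP_eq)
  have "Psigma (Pte act t (act s f)) h"
    using sigma_Pte_PT[of t] hk by (metis sig_sym sig_trans)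
  moreover have "ple (Pmul act) (Pplus act k) (Pstar act (Pte act t (act s f)))"
    by (simp add: hk Pplus_Pte Pstar_Pte ple_PX_iff)
  moreover have "Pte act t (act s f) \<in> HP act"
    by (auto simp: HP_eq)
  ultimately show "\<exists>u\<in>HP act. Psigma u h \<and> ple (Pmul act) (Pplus act k) (Pstar act u)"
    by blast
qed

lemma generates_HP: "generates (Pcar act) (Pmul act) (Pone act) (HP act)"
proof -
  have "pcls act w \<in> mgen (Pmul act) (Pone act) (HP act)" if "w \<noteq> []" for w
    using that
  proof (induction w)
    case (Cons l w)
    have letter: "pcls act [l] \<in> HP act"
      by (cases l) (auto simp: HP_eq PT_def [symmetric] PX_def [symmetric] PT_eq_Pte PX_eq_Pte)
    show ?case
    proof (cases "w = []")
      case True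
      then show ?thesis using letter by (simp add: mgen_gen)
    next
      case False
      then have "pcls act (l # w) = Pmul act (pcls act [l]) (pcls act w)"
        by (simp add: Pmul_pcls)
      then show ?thesis
        using Cons False letter by (metis mgen_gen mgen_mul)
    qed
  qed simp
  then show ?thesis
    unfolding generates_def by (auto elim: PcarE)
qed

lemma has_canonical_forms_HP:
  "has_canonical_forms (Pcar act) (Pmul act) (Pplus act) (Pstar act) (HP act)"
  unfolding has_canonical_forms_def
proof
  fix a
  assume "a \<in> Pcar act"
  then obtain cs where cs: "canonical_pairs cs" "a = pcls act (te_word cs)"
    using ex_canonical_pairs by blast
  show "\<exists>!hs. Pcanonical hs \<and> lprod (Pmul act) hs = a"
  proof (rule ex1I[of _ "map (case_prod (Pte act)) cs"])
    fix hs
    assume hs: "Pcanonical hs \<and> lprod (Pmul act) hs = a"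
    then obtain cs' where cs': "hs = map (case_prod (Pte act)) cs'" "canonical_pairs cs'"
      using canonical_HP_iff by blast
    then have "pcls act (te_word cs') = a"
      using hs lprod_map_Pte canonical_pairs_nonempty by metis
    then show "hs = map (case_prod (Pte act)) cs"
      using canonical_pairs_unique cs cs' by metis
  next
    show "Pcanonical (map (case_prod (Pte act)) cs)
        \<and> lprod (Pmul act) (map (case_prod (Pte act)) cs) = a"
      using cs canonical_map_Pte_iff lprod_map_Pte[OF canonical_pairs_nonempty[OF cs(1)]] by simp
  qed
qed

lemma proper_set_HP: "proper_set (Pcar act) (Pmul act) (Pplus act) (Pstar act) (HP act)"
  unfolding proper_set_def
proof (intro ballI iffI)
  fix h k
  assume "h \<in> HP act" "k \<in> HP act"
    and hk: "Pstar act h = Pstar act k \<and> Psigma h k"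
  then obtain t e s f where "h = Pte act t e" "k = Pte act s f"
    by (auto simp: HP_eq)
  with hk show "h = k"
    by (auto simp: Pstar_Pte dest: PX_inj sigma_Pte_imp_eq)
next
  fix h k
  assume "h \<in> HP act" "h = k"
  then show "Pstar act h = Pstar act k \<and> Psigma h k"
    by (auto simp: HP_eq Pte_in_Pcar intro: sig_refl)
qed

lemma Pplus_Pstar_canonical:
  assumes "Pcanonical hs"
  shows "Pplus act (lprod (Pmul act) hs) = Pplus act (hd hs)"
    and "Pstar act (lprod (Pmul act) hs) = Pstar act (last hs)"
proof -
  obtain cs where hs: "hs = map (case_prod (Pte act)) cs" and cs: "canonical_pairs cs"
    using assms canonical_HP_iff by blast
  obtain t e where hd: "hd hs = Pte act t e" "hd cs = (t, e)"
    using hs canonical_pairs_nonempty[OF cs] by (cases "hd cs") (simp add: hd_map)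
  obtain t' e' where last: "last hs = Pte act t' e'" "last cs = (t', e')"
    using hs canonical_pairs_nonempty[OF cs] by (cases "last cs") (simp add: last_map)
  have prod: "lprod (Pmul act) hs = pcls act (te_word cs)"
    using hs lprod_map_Pte canonical_pairs_nonempty[OF cs] by simp
  show "Pplus act (lprod (Pmul act) hs) = Pplus act (hd hs)"
    unfolding prod using Pplus_te_word[OF cs] by (simp add: hd Pplus_Pte)
  show "Pstar act (lprod (Pmul act) hs) = Pstar act (last hs)"
    unfolding prod using Pstar_te_word[OF cs] by (simp add: last Pstar_Pte)
qed

end

theorem mainTheorem14:
  fixes act :: "'t::monoid_mult \<Rightarrow> 'x::bounded_semilattice_inf_top \<Rightarrow> 'x"
  assumes "order_preserving_action act"
  shows "proper_basis (Pcar act) (Pmul act) (Pone act) (Pplus act) (Pstar act) (HP act)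
       \<and> (\<forall>a \<in> Pcar act. \<forall>hs.
            canonical (Pcar act) (Pmul act) (Pplus act) (Pstar act) (HP act) hs
            \<and> lprod (Pmul act) hs = a
            \<longrightarrow> Pplus act a = Pplus act (hd hs) \<and> Pstar act a = Pstar act (last hs))"
proof -
  interpret ordered_action act
    by (rule ordered_action.intro) (rule assms)
  show ?thesis
    unfolding proper_basis_def basis_def
    using atomic_HP generates_HP has_canonical_forms_HP proper_set_HP Pplus_Pstar_canonical
    by blast
qed

end
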